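(* Let $(X,D)$ be an $\mathcal{F}$-metric space with respect to some $(f,\alpha)\in\mathcal{F}\times[0,\infty)$. Then the topological space $(X,\tau_{\mathcal{F}})$ is metrizable, i.e. there is a metric $d$ on $X$ whose metric topology equals $\tau_{\mathcal{F}}$.
   Context: $\mathcal{F}$ denotes the class of functions $f:(0,\infty)\to\mathbb{R}$ such that ($\mathcal{F}_1$) $f$ is non-decreasing, and ($\mathcal{F}_2$) for every sequence $(t_n)\subseteq(0,\infty)$, $\lim_n t_n=0$ iff $\lim_n f(t_n)=-\infty$. An $\mathcal{F}$-metric on a non-empty set $X$ is a map $D:X\times X\to[0,\infty)$ for which there exists $(f,\alpha)\in\mathcal{F}\times[0,\infty)$ such that: (D1) $D(x,y)=0$ iff $x=y$; (D2) $D(x,y)=D(y,x)$ for all $x,y$; (D3) for all $(x,y)\in X\times X$, every integer $N\ge2$ and every $u_1,\dots,u_N\in X$ with $u_1=x$, $u_N=y$: if $D(x,y)>0$ then $f(D(x,y))\le f\big(\sum_{i=1}^{N-1}D(u_i,u_{i+1})\big)+\alpha$. The pair $(X,D)$ is an $\mathcal{F}$-metric space. The topology $\tau_{\mathcal{F}}$ consists of all $C\subseteq X$ such that for every $x\in C$ there is $r>0$ with $B(x,r)=\{y\in X: D(y,x)<r\}\subseteq C$. *)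

theory Defs
  imports "HOL-Analysis.Analysis"
begin

text \<open>The class F: functions f on (0,inf) (represented as real functions, only
  values on positive reals matter) that are non-decreasing and such that for
  every positive sequence t, t n tends to 0 iff f (t n) tends to minus infinity.\<close>
definition F_class :: "(real \<Rightarrow> real) \<Rightarrow> bool" where
  "F_class f \<longleftrightarrow>
     (\<forall>s t. 0 < s \<longrightarrow> s \<le> t \<longrightarrow> f s \<le> f t) \<and>
     (\<forall>t :: nat \<Rightarrow> real. (\<forall>n. 0 < t n) \<longrightarrow>
        (t \<longlonglongrightarrow> 0 \<longleftrightarrow> filterlim (\<lambda>n. f (t n)) at_bot sequentially))"

definition F_metric_wrt :: "'a set \<Rightarrow> ('a \<Rightarrow> 'a \<Rightarrow> real) \<Rightarrow> (real \<Rightarrow> real) \<Rightarrow> real \<Rightarrow> bool" where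
  "F_metric_wrt X D f \<alpha> \<longleftrightarrow>
     F_class f \<and> 0 \<le> \<alpha> \<and>
     (\<forall>x\<in>X. \<forall>y\<in>X. 0 \<le> D x y) \<and>
     (\<forall>x\<in>X. \<forall>y\<in>X. D x y = 0 \<longleftrightarrow> x = y) \<and>
     (\<forall>x\<in>X. \<forall>y\<in>X. D x y = D y x) \<and>
     (\<forall>x\<in>X. \<forall>y\<in>X. \<forall>N::nat. \<forall>u :: nat \<Rightarrow> 'a.
        2 \<le> N \<longrightarrow> (\<forall>i\<in>{1..N}. u i \<in> X) \<longrightarrow> u 1 = x \<longrightarrow> u N = y \<longrightarrow>
        0 < D x y \<longrightarrow> f (D x y) \<le> f (\<Sum>i=1..N-1. D (u i) (u (i+1))) + \<alpha>)"

definition F_topology :: "'a set \<Rightarrow> ('a \<Rightarrow> 'a \<Rightarrow> real) \<Rightarrow> 'a topology" where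
  "F_topology X D = topology (\<lambda>C. C \<subseteq> X \<and>
      (\<forall>x\<in>C. \<exists>r>0. {y\<in>X. D y x < r} \<subseteq> C))"

end

theory Submission
  imports Defs
begin

text \<open>Let \<open>\<rho>(x, y)\<close> be the infimum of the \<open>D\<close>-lengths of all finite chains from \<open>x\<close> to \<open>y\<close>.
  Concatenating and reversing chains shows that \<open>\<rho>\<close> is a pseudometric with \<open>\<rho> \<le> D\<close>.
  Conversely, axiom (D3) bounds \<open>f (D x y)\<close> by \<open>f (length of any chain) + \<alpha>\<close>, and since \<open>f\<close>
  tends to \<open>-\<infinity>\<close> at \<open>0\<close>, a chain of small length forces \<open>D x y\<close> to be small. Hence \<open>\<rho>\<close> is a
  metric, and its balls and the \<open>D\<close>-balls generate the same topology \<open>\<tau>\<^sub>\<F>\<close>.\<close>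

lemma F_class_eventually_below:
  assumes "F_class f"
  shows "\<exists>d>0. \<forall>t. 0 < t \<longrightarrow> t < d \<longrightarrow> f t < c"
proof (rule ccontr)
  assume "\<not> ?thesis"
  then have "\<forall>n::nat. \<exists>t. 0 < t \<and> t < 1 / real (Suc n) \<and> c \<le> f t"
    by (metis not_less of_nat_0_less_iff zero_less_Suc divide_pos_pos zero_less_one)
  then obtain t where t: "\<And>n. 0 < t n" "\<And>n. t n < 1 / real (Suc n)" "\<And>n. c \<le> f (t n)"
    by metis
  have "t \<longlonglongrightarrow> 0"
  proof (rule tendsto_sandwich[of "\<lambda>_. 0 :: real" _ _ "\<lambda>n. 1 / real (Suc n)"])
    show "\<forall>\<^sub>F n in sequentially. 0 \<le> t n"
      by (intro always_eventually allI less_imp_le t(1))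
    show "\<forall>\<^sub>F n in sequentially. t n \<le> 1 / real (Suc n)"
      by (intro always_eventually allI less_imp_le t(2))
    show "(\<lambda>n. 1 / real (Suc n)) \<longlonglongrightarrow> 0"
      using LIMSEQ_inverse_real_of_nat by (simp add: inverse_eq_divide)
  qed simp
  then have "filterlim (\<lambda>n. f (t n)) at_bot sequentially"
    using assms t(1) unfolding F_class_def by blast
  then have "\<forall>\<^sub>F n in sequentially. f (t n) < c"
    by (simp add: filterlim_at_bot_dense)
  then obtain n where "f (t n) < c"
    by (auto simp: eventually_sequentially)
  with t(3)[of n] show False
    by simp
qed

inductive chain_length :: "'a set \<Rightarrow> ('a \<Rightarrow> 'a \<Rightarrow> real) \<Rightarrow> 'a \<Rightarrow> 'a \<Rightarrow> real \<Rightarrow> bool"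
  for X D where
  single: "x \<in> X \<Longrightarrow> y \<in> X \<Longrightarrow> chain_length X D x y (D x y)"
| snoc: "chain_length X D x y a \<Longrightarrow> z \<in> X \<Longrightarrow> chain_length X D x z (a + D y z)"

lemma chain_length_in_carrier:
  "chain_length X D x y a \<Longrightarrow> x \<in> X \<and> y \<in> X"
  by (induction rule: chain_length.induct) auto

lemma chain_length_cons:
  "chain_length X D y z b \<Longrightarrow> x \<in> X \<Longrightarrow> chain_length X D x z (D x y + b)"
proof (induction rule: chain_length.induct)
  case (single y z)
  then show ?case
    by (metis chain_length.single chain_length.snoc)
next
  case (snoc y w b z)
  then show ?case
    by (metis add.assoc chain_length.snoc)
qed

lemma chain_length_append:
  "chain_length X D y z b \<Longrightarrow> chain_length X D x y a \<Longrightarrow> chain_length X D x z (a + b)"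
proof (induction rule: chain_length.induct)
  case (single y z)
  then show ?case
    by (simp add: chain_length.snoc)
next
  case (snoc y w b z)
  then show ?case
    by (metis add.assoc chain_length.snoc)
qed

lemma chain_length_reverse:
  assumes "\<And>x y. x \<in> X \<Longrightarrow> y \<in> X \<Longrightarrow> D x y = D y x"
  shows "chain_length X D x y a \<Longrightarrow> chain_length X D y x a"
proof (induction rule: chain_length.induct)
  case (single x y)
  then show ?case
    by (metis assms chain_length.single)
next
  case (snoc x y a z)
  then have "chain_length X D z x (D z y + a)"
    by (blast intro: chain_length_cons)
  moreover have "D z y = D y z"
    using assms chain_length_in_carrier[OF snoc.hyps(1)] snoc.hyps(2) by blast
  ultimately show ?case
    by (simp add: add.commute)
qed

lemma chain_length_nonneg:
  assumes "\<And>x y. x \<in> X \<Longrightarrow> y \<in> X \<Longrightarrow> 0 \<le> D x y"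
  shows "chain_length X D x y a \<Longrightarrow> 0 \<le> a"
proof (induction rule: chain_length.induct)
  case (single x y)
  then show ?case
    by (rule assms)
next
  case (snoc x y a z)
  have "0 \<le> D y z"
    using assms chain_length_in_carrier[OF snoc.hyps(1)] snoc.hyps(2) by blast
  with snoc.IH show ?case
    by simp
qed

lemma chain_length_pos:
  assumes "\<And>x y. x \<in> X \<Longrightarrow> y \<in> X \<Longrightarrow> 0 \<le> D x y"
    and "\<And>x y. x \<in> X \<Longrightarrow> y \<in> X \<Longrightarrow> D x y = 0 \<longleftrightarrow> x = y"
  shows "chain_length X D x y a \<Longrightarrow> x \<noteq> y \<Longrightarrow> 0 < a"
proof (induction rule: chain_length.induct)
  case (single x y)
  then have "D x y \<noteq> 0"
    using assms(2) by blast
  then show ?case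
    using assms(1) single by (simp add: order_le_neq_trans)
next
  case (snoc x y a z)
  have "y \<in> X"
    using chain_length_in_carrier[OF snoc.hyps(1)] by blast
  then have "0 \<le> D y z"
    using assms(1) snoc.hyps(2) by blast
  show ?case
  proof (cases "x = y")
    case True
    then have "D y z \<noteq> 0"
      using assms(2) \<open>y \<in> X\<close> snoc.hyps(2) snoc.prems by blast
    moreover have "0 \<le> a"
      using assms(1) snoc.hyps(1) by (rule chain_length_nonneg)
    ultimately show ?thesis
      using \<open>0 \<le> D y z\<close> by linarith
  next
    case False
    then show ?thesis
      using snoc.IH \<open>0 \<le> D y z\<close> by linarith
  qed
qed

lemma chain_length_sequence:
  "chain_length X D x y a \<Longrightarrow> \<exists>N::nat. \<exists>u. 2 \<le> N \<and> (\<forall>i\<in>{1..N}. u i \<in> X) \<and> u 1 = x \<and> u N = y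
     \<and> a = (\<Sum>i=1..N-1. D (u i) (u (i+1)))"
proof (induction rule: chain_length.induct)
  case (single x y)
  show ?case
    by (rule exI[of _ "2::nat"], rule exI[of _ "\<lambda>i. if i = 1 then x else y"]) (use single in auto)
next
  case (snoc x y a z)
  then obtain N :: nat and u where N: "2 \<le> N" "\<forall>i\<in>{1..N}. u i \<in> X" "u 1 = x" "u N = y"
    and a: "a = (\<Sum>i=1..N-1. D (u i) (u (i+1)))"
    by blast
  define v where "v = u(N + 1 := z)"
  have "(\<Sum>i=1..N-1. D (v i) (v (i+1))) = a"
    unfolding a v_def by (rule sum.cong) auto
  moreover have "v N = y" "v (N + 1) = z"
    unfolding v_def using N(4) by simp_all
  moreover have "(\<Sum>i=1..N. g i) = (\<Sum>i=1..N-1. g i) + g N" for g :: "nat \<Rightarrow> real"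
    using N sum.cl_ivl_Suc[of g 1 "N-1"] by (simp add: Suc_diff_le)
  ultimately have "(\<Sum>i=1..(N+1)-1. D (v i) (v (i+1))) = a + D y z"
    by simp
  moreover have "\<forall>i\<in>{1..N+1}. v i \<in> X"
    using N snoc.hyps(2) by (auto simp: v_def)
  ultimately show ?case
    using N by (intro exI[of _ "N+1"] exI[of _ v]) (auto simp: v_def)
qed

definition chain_dist :: "'a set \<Rightarrow> ('a \<Rightarrow> 'a \<Rightarrow> real) \<Rightarrow> 'a \<Rightarrow> 'a \<Rightarrow> real" where
  "chain_dist X D x y = (if x \<in> X \<and> y \<in> X then Inf {a. chain_length X D x y a} else 0)"

text \<open>Axiom (D3) is stated with the endpoints written as \<open>u 1\<close> and \<open>u N\<close>.\<close>

locale F_metric_space =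
  fixes X :: "'a set" and D :: "'a \<Rightarrow> 'a \<Rightarrow> real" and f :: "real \<Rightarrow> real" and \<alpha> :: real
  assumes F_class: "F_class f"
    and D_nonneg: "x \<in> X \<Longrightarrow> y \<in> X \<Longrightarrow> 0 \<le> D x y"
    and D_eq_0_iff: "x \<in> X \<Longrightarrow> y \<in> X \<Longrightarrow> D x y = 0 \<longleftrightarrow> x = y"
    and D_commute: "x \<in> X \<Longrightarrow> y \<in> X \<Longrightarrow> D x y = D y x"
    and f_D_le_sequence_length:
      "\<lbrakk>2 \<le> (N::nat); \<forall>i\<in>{1..N}. u i \<in> X; 0 < D (u 1) (u N)\<rbrakk>
       \<Longrightarrow> f (D (u 1) (u N)) \<le> f (\<Sum>i=1..N-1. D (u i) (u (i+1))) + \<alpha>"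

lemma F_metric_space_if_F_metric_wrt:
  assumes "F_metric_wrt X D f \<alpha>"
  shows "F_metric_space X D f \<alpha>"
proof -
  have "F_class f" and nonneg: "\<forall>x\<in>X. \<forall>y\<in>X. 0 \<le> D x y"
    and zero: "\<forall>x\<in>X. \<forall>y\<in>X. D x y = 0 \<longleftrightarrow> x = y"
    and commute: "\<forall>x\<in>X. \<forall>y\<in>X. D x y = D y x"
    and chain: "\<forall>x\<in>X. \<forall>y\<in>X. \<forall>N::nat. \<forall>u. 2 \<le> N \<longrightarrow> (\<forall>i\<in>{1..N}. u i \<in> X)
       \<longrightarrow> u 1 = x \<longrightarrow> u N = y \<longrightarrow> 0 < D x y \<longrightarrow> f (D x y) \<le> f (\<Sum>i=1..N-1. D (u i) (u (i+1))) + \<alpha>"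
    using assms unfolding F_metric_wrt_def by argo+
  show ?thesis
  proof
    show "F_class f" by fact
    show "0 \<le> D x y" "D x y = 0 \<longleftrightarrow> x = y" "D x y = D y x" if "x \<in> X" "y \<in> X" for x y
      using nonneg zero commute that by simp_all
    show "f (D (u 1) (u N)) \<le> f (\<Sum>i=1..N-1. D (u i) (u (i+1))) + \<alpha>"
      if "2 \<le> N" "\<forall>i\<in>{1..N}. u i \<in> X" "0 < D (u 1) (u N)" for N :: nat and u
      using that by (intro chain[rule_format]) auto
  qed
qed

context F_metric_space
begin

lemma f_D_le_chain_length:
  assumes "chain_length X D x y a" "0 < D x y"
  shows "f (D x y) \<le> f a + \<alpha>"
proof -
  obtain N :: nat and u where N: "2 \<le> N" "\<forall>i\<in>{1..N}. u i \<in> X"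
    and ends: "u 1 = x" "u N = y" and a: "a = (\<Sum>i=1..N-1. D (u i) (u (i+1)))"
    using chain_length_sequence[OF assms(1)] by blast
  have "f (D (u 1) (u N)) \<le> f (\<Sum>i=1..N-1. D (u i) (u (i+1))) + \<alpha>"
    using N assms(2) ends by (intro f_D_le_sequence_length) simp_all
  then show ?thesis
    unfolding ends a .
qed

lemma short_chain_imp_D_small:
  assumes "0 < e"
  shows "\<exists>d>0. \<forall>x y a. chain_length X D x y a \<longrightarrow> a < d \<longrightarrow> D x y < e"
proof -
  obtain d where "d > 0" and d: "\<And>t. 0 < t \<Longrightarrow> t < d \<Longrightarrow> f t < f e - \<alpha>"
    using F_class_eventually_below[OF F_class] by blast
  have "D x y < e" if chain: "chain_length X D x y a" and "a < d" for x y a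
  proof (rule ccontr)
    assume "\<not> D x y < e"
    then have "e \<le> D x y"
      by simp
    have "x \<in> X" "y \<in> X"
      using chain_length_in_carrier[OF chain] by blast+
    then have "x \<noteq> y"
      using D_eq_0_iff[OF \<open>x \<in> X\<close> \<open>y \<in> X\<close>] \<open>e \<le> D x y\<close> assms by auto
    then have "0 < a"
      using chain_length_pos[of X D, OF D_nonneg D_eq_0_iff chain] by blast
    have "f e \<le> f (D x y)"
      using F_class assms \<open>e \<le> D x y\<close> unfolding F_class_def by blast
    also have "\<dots> \<le> f a + \<alpha>"
      using chain assms \<open>e \<le> D x y\<close> by (intro f_D_le_chain_length) auto
    also have "\<dots> < f e"
      using d[OF \<open>0 < a\<close> \<open>a < d\<close>] by simp
    finally show False
      by simp
  qed
  then show ?thesis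
    using \<open>d > 0\<close> by blast
qed

abbreviation \<rho> :: "'a \<Rightarrow> 'a \<Rightarrow> real" where
  "\<rho> \<equiv> chain_dist X D"

lemma chain_lengths_bdd_below: "bdd_below {a. chain_length X D x y a}"
  using chain_length_nonneg[of X D, OF D_nonneg] by (intro bdd_belowI[of _ 0]) blast

lemma chain_dist_nonneg: "0 \<le> \<rho> x y"
proof (cases "x \<in> X \<and> y \<in> X")
  case True
  have "0 \<le> Inf {a. chain_length X D x y a}"
  proof (rule cInf_greatest)
    show "{a. chain_length X D x y a} \<noteq> {}"
      using True chain_length.single[where X = X and D = D] by blast
    show "0 \<le> a" if "a \<in> {a. chain_length X D x y a}" for a
      using that chain_length_nonneg[of X D, OF D_nonneg] by blast
  qed
  with True show ?thesis
    by (simp add: chain_dist_def)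
qed (auto simp: chain_dist_def)

lemma chain_dist_le:
  assumes "chain_length X D x y a"
  shows "\<rho> x y \<le> a"
proof -
  have "x \<in> X" "y \<in> X"
    using chain_length_in_carrier[OF assms] by blast+
  then show ?thesis
    using assms chain_lengths_bdd_below by (simp add: chain_dist_def cInf_lower)
qed

lemma chain_dist_le_D: "x \<in> X \<Longrightarrow> y \<in> X \<Longrightarrow> \<rho> x y \<le> D x y"
  by (simp add: chain_dist_le chain_length.single[where X = X and D = D])

lemma chain_dist_less_iff:
  assumes "x \<in> X" "y \<in> X"
  shows "\<rho> x y < r \<longleftrightarrow> (\<exists>a. chain_length X D x y a \<and> a < r)"
proof
  assume "\<rho> x y < r"
  then have "Inf {a. chain_length X D x y a} < r"
    using assms by (simp add: chain_dist_def)
  moreover have "chain_length X D x y (D x y)"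
    using assms by (rule chain_length.single)
  ultimately have "\<exists>a\<in>{a. chain_length X D x y a}. a < r"
    by (intro cInf_lessD) auto
  then show "\<exists>a. chain_length X D x y a \<and> a < r"
    by blast
next
  assume "\<exists>a. chain_length X D x y a \<and> a < r"
  then obtain a where "chain_length X D x y a" "a < r"
    by blast
  then show "\<rho> x y < r"
    using chain_dist_le[of x y a] by linarith
qed

lemma chain_dist_triangle:
  assumes "x \<in> X" "y \<in> X" "z \<in> X"
  shows "\<rho> x z \<le> \<rho> x y + \<rho> y z"
proof (rule field_le_epsilon)
  fix e :: real
  assume "0 < e"
  obtain a where a: "chain_length X D x y a" "a < \<rho> x y + e / 2"
    using chain_dist_less_iff[OF assms(1,2), of "\<rho> x y + e / 2"] \<open>0 < e\<close> by auto
  obtain b where b: "chain_length X D y z b" "b < \<rho> y z + e / 2"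
    using chain_dist_less_iff[OF assms(2,3), of "\<rho> y z + e / 2"] \<open>0 < e\<close> by auto
  have "\<rho> x z \<le> a + b"
    using chain_length_append[OF b(1) a(1)] by (rule chain_dist_le)
  then show "\<rho> x z \<le> \<rho> x y + \<rho> y z + e"
    using a(2) b(2) by simp
qed

lemma chain_dist_eq_0_iff:
  assumes "x \<in> X" "y \<in> X"
  shows "\<rho> x y = 0 \<longleftrightarrow> x = y"
proof
  assume "\<rho> x y = 0"
  have small: "D x y < e" if e: "0 < e" for e
  proof -
    obtain d where "0 < d" and d: "\<forall>x y a. chain_length X D x y a \<longrightarrow> a < d \<longrightarrow> D x y < e"
      using short_chain_imp_D_small[OF e] by blast
    then have "\<rho> x y < d"
      using \<open>\<rho> x y = 0\<close> by simp
    then obtain a where "chain_length X D x y a" "a < d"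
      using chain_dist_less_iff[OF assms] by blast
    then show ?thesis
      using d by blast
  qed
  have "\<not> 0 < D x y"
    using small by fastforce
  then have "D x y = 0"
    using D_nonneg[OF assms] by linarith
  then show "x = y"
    using D_eq_0_iff[OF assms] by blast
next
  assume "x = y"
  then have "D x y = 0"
    using D_eq_0_iff[OF assms] by blast
  moreover have "0 \<le> \<rho> x y"
    by (rule chain_dist_nonneg)
  ultimately show "\<rho> x y = 0"
    using chain_dist_le_D[OF assms] by linarith
qed

lemma Metric_space_chain_dist: "Metric_space X \<rho>"
proof
  fix x y z
  show "0 \<le> \<rho> x y"
    by (rule chain_dist_nonneg)
  have "chain_length X D x y = chain_length X D y x"
    using chain_length_reverse[of X D, OF D_commute] by (intro ext) blast
  then show "\<rho> x y = \<rho> y x"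
    by (simp add: chain_dist_def conj_commute)
  show "\<rho> x z \<le> \<rho> x y + \<rho> y z" if "x \<in> X" "y \<in> X" "z \<in> X"
    using that by (rule chain_dist_triangle)
  show "\<rho> x y = 0 \<longleftrightarrow> x = y" if "x \<in> X" "y \<in> X"
    using that by (rule chain_dist_eq_0_iff)
qed

interpretation chain: Metric_space X \<rho>
  by (rule Metric_space_chain_dist)

lemma D_ball_subset_chain_ball:
  assumes "x \<in> X"
  shows "{y\<in>X. D y x < r} \<subseteq> chain.mball x r"
proof
  fix y
  assume y: "y \<in> {y\<in>X. D y x < r}"
  then have "\<rho> x y \<le> D y x"
    using chain_dist_le_D[OF assms] D_commute[OF assms] by simp
  then show "y \<in> chain.mball x r"
    using assms y by simp
qed

lemma chain_ball_subset_D_ball: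
  assumes "0 < r"
  shows "\<exists>d>0. chain.mball x d \<subseteq> {y\<in>X. D y x < r}"
proof -
  obtain d where "0 < d" and d: "\<forall>x y a. chain_length X D x y a \<longrightarrow> a < d \<longrightarrow> D x y < r"
    using short_chain_imp_D_small[OF assms] by blast
  have "chain.mball x d \<subseteq> {y\<in>X. D y x < r}"
  proof
    fix y
    assume "y \<in> chain.mball x d"
    then have "x \<in> X" "y \<in> X" "\<rho> x y < d"
      by auto
    then obtain a where "chain_length X D x y a" "a < d"
      using chain_dist_less_iff by blast
    then have "D x y < r"
      using d by blast
    then show "y \<in> {y\<in>X. D y x < r}"
      using \<open>y \<in> X\<close> D_commute[OF \<open>y \<in> X\<close> \<open>x \<in> X\<close>] by simp
  qed
  then show ?thesis
    using \<open>0 < d\<close> by blast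
qed

lemma F_topology_eq_mtopology: "F_topology X D = chain.mtopology"
proof -
  have "(\<exists>r>0. {y\<in>X. D y x < r} \<subseteq> C) \<longleftrightarrow> (\<exists>r>0. chain.mball x r \<subseteq> C)" if "x \<in> X" for x C
    using D_ball_subset_chain_ball[OF that] chain_ball_subset_D_ball by (meson order_trans)
  then have "(C \<subseteq> X \<and> (\<forall>x\<in>C. \<exists>r>0. {y\<in>X. D y x < r} \<subseteq> C)) \<longleftrightarrow> chain.mopen C" for C
    unfolding chain.mopen_def by blast
  then show ?thesis
    unfolding F_topology_def chain.mtopology_def by presburger
qed

end

theorem mainTheorem2:
  fixes X :: "'a set" and D :: "'a \<Rightarrow> 'a \<Rightarrow> real" and f :: "real \<Rightarrow> real" and \<alpha> :: real
  assumes "X \<noteq> {}"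
    and "F_metric_wrt X D f \<alpha>"
  shows "metrizable_space (F_topology X D)"
proof -
  interpret F_metric_space X D f \<alpha>
    using assms(2) by (rule F_metric_space_if_F_metric_wrt)
  show ?thesis
    unfolding metrizable_space_def
    using Metric_space_chain_dist F_topology_eq_mtopology by blast
qed

end
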